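(* Let $\alpha>0$ and $\eta(\tau;\alpha)=\dfrac{\Phi(\tau)}{\Phi(\tau)+\Phi(\alpha(1-\tau))}$ with $\Phi(\tau)=\tau^{m+1}$. Then $\eta(\cdot;\alpha):[0,1]\to\mathbb{R}$ is a transition function, i.e., for all $\mu\in\{1,\dots,m\}$: (i) $\eta^{(\mu)}(\tau;\alpha)$ exists $\forall\tau\in[0,1]$; (ii) $\eta^{(\mu)}(0;\alpha)=\eta^{(\mu)}(1;\alpha)=0$; (iii) $\eta(0;\alpha)=0$, $\eta(1;\alpha)=1$; (iv) $\lim_{\alpha\to0}\eta(\tau;\alpha)=1$ for all $\tau\in(0,1]$.
   Context: $m\in\mathbb{N}$ is the order of the integrator dynamics considered; $\eta^{(\mu)}$ denotes the $\mu$-th derivative with respect to $\tau$. *)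

theory Defs
  imports "HOL-Analysis.Analysis"
begin

definition Phi :: "nat \<Rightarrow> real \<Rightarrow> real" where
  "Phi m t = t ^ (m + 1)"

definition eta :: "nat \<Rightarrow> real \<Rightarrow> real \<Rightarrow> real" where
  "eta m \<alpha> t = Phi m t / (Phi m t + Phi m (\<alpha> * (1 - t)))"

end

theory Submission
  imports Defs "HOL-Computational_Algebra.Polynomial"
begin

text \<open>With \<open>q(t) = t^(m+1) + (\<alpha>(1 - t))^(m+1)\<close>, which has no zeros on \<open>[0, 1]\<close>,
  one has \<open>\<eta>(t) = t^(m+1) / q(t)\<close> and \<open>\<eta>(t) - 1 = (t - 1)^(m+1) r(t) / q(t)\<close> for a
  constant polynomial \<open>r\<close>. Differentiating \<open>(t - c)^n r(t) / q(t)^j\<close> gives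
  \<open>(t - c)^(n-1) r'(t) / q(t)^(j+1)\<close> for another polynomial \<open>r'\<close>, so the derivatives of
  orders \<open>1, \<dots>, m\<close> exist on \<open>[0, 1]\<close> and vanish at both endpoints. The limit
  \<open>\<alpha> \<rightarrow> 0\<close> is plain continuity in \<open>\<alpha>\<close>.\<close>

definition vanishes_to_order :: "real poly \<Rightarrow> real \<Rightarrow> nat \<Rightarrow> (real \<Rightarrow> real) \<Rightarrow> bool" where
  "vanishes_to_order q c n g \<longleftrightarrow>
     (\<exists>r j. \<forall>x. poly q x \<noteq> 0 \<longrightarrow> g x = (x - c) ^ n * poly r x / poly q x ^ j)"

lemma has_real_derivative_vanishing:
  fixes q r :: "real poly"
  assumes qx: "poly q x \<noteq> 0"
    and f: "\<forall>y. poly q y \<noteq> 0 \<longrightarrow> f y = b + (y - c) ^ Suc n * poly r y / poly q y ^ j"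
  shows "(f has_real_derivative
           (x - c) ^ n * poly (smult (real (Suc n)) (r * q)
              + [:-c, 1:] * (pderiv r * q - smult (real j) (r * pderiv q))) x
           / poly q x ^ (j + 1)) (at x)"
proof -
  have "((\<lambda>y. b + (y - c) ^ Suc n * poly r y / poly q y ^ j) has_real_derivative
          real (Suc n) * (x - c) ^ n * poly r x / poly q x ^ j
          + (x - c) ^ Suc n * ((poly (pderiv r) x * poly q x ^ j
              - poly r x * (real j * poly q x ^ (j - 1) * poly (pderiv q) x))
             / (poly q x ^ j * poly q x ^ j))) (at x)"
    by (rule derivative_eq_intros refl poly_DERIV | simp add: qx)+ (simp add: qx field_simps)
  also have "real (Suc n) * (x - c) ^ n * poly r x / poly q x ^ j
          + (x - c) ^ Suc n * ((poly (pderiv r) x * poly q x ^ j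
              - poly r x * (real j * poly q x ^ (j - 1) * poly (pderiv q) x))
             / (poly q x ^ j * poly q x ^ j))
        = (x - c) ^ n * poly (smult (real (Suc n)) (r * q)
              + [:-c, 1:] * (pderiv r * q - smult (real j) (r * pderiv q))) x
           / poly q x ^ (j + 1)"
    using qx by (cases j) (simp_all add: field_simps)
  moreover have "open {y. poly q y \<noteq> 0}"
    by (intro open_Collect_neq continuous_intros)
  ultimately show ?thesis
    using f qx by (auto intro: has_field_derivative_transform_within_open)
qed

lemma vanishes_to_order_deriv:
  assumes "vanishes_to_order q c (Suc n) (\<lambda>x. f x - b)"
  shows "vanishes_to_order q c n (deriv f)"
proof -
  obtain r j where "\<forall>x. poly q x \<noteq> 0 \<longrightarrow> f x = b + (x - c) ^ Suc n * poly r x / poly q x ^ j"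
    using assms unfolding vanishes_to_order_def by (metis diff_eq_eq add.commute)
  from has_real_derivative_vanishing[OF _ this] show ?thesis
    unfolding vanishes_to_order_def by (blast intro: DERIV_imp_deriv)
qed

lemma vanishes_to_order_differentiable:
  assumes "vanishes_to_order q c (Suc n) (\<lambda>x. f x - b)" and "poly q x \<noteq> 0"
  shows "f differentiable (at x)"
proof -
  obtain r j where "\<forall>x. poly q x \<noteq> 0 \<longrightarrow> f x = b + (x - c) ^ Suc n * poly r x / poly q x ^ j"
    using assms unfolding vanishes_to_order_def by (metis diff_eq_eq add.commute)
  from has_real_derivative_vanishing[OF assms(2) this] show ?thesis
    using real_differentiable_def by blast
qed

lemma vanishes_to_order_higher_deriv:
  assumes f: "vanishes_to_order q c n (\<lambda>x. f x - a)" and "1 \<le> k" "k \<le> n"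
  shows "vanishes_to_order q c (n - k) ((deriv ^^ k) f)"
  using assms(2,3)
proof (induction k rule: dec_induct)
  case base
  with f show ?case
    by (cases n) (auto intro: vanishes_to_order_deriv)
next
  case (step k)
  then show ?case
    using vanishes_to_order_deriv[of q c "n - Suc k" "(deriv ^^ k) f" 0] by (simp add: Suc_diff_Suc)
qed

lemma higher_deriv_differentiable_if_vanishes:
  assumes f: "vanishes_to_order q c n (\<lambda>x. f x - a)" and "k < n" "poly q x \<noteq> 0"
  shows "(deriv ^^ k) f differentiable (at x)"
proof (cases "k = 0")
  case True
  with assms show ?thesis
    by (cases n) (auto intro: vanishes_to_order_differentiable)
next
  case False
  with assms have "vanishes_to_order q c (Suc (n - k - 1)) ((deriv ^^ k) f)"
    using vanishes_to_order_higher_deriv[OF f, of k] by (simp add: Suc_diff_Suc)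
  with assms(3) show ?thesis
    using vanishes_to_order_differentiable[of q c _ "(deriv ^^ k) f" 0] by simp
qed

lemma higher_deriv_zero_if_vanishes:
  assumes "vanishes_to_order q c n (\<lambda>x. f x - a)" and "1 \<le> k" "k < n" "poly q c \<noteq> 0"
  shows "(deriv ^^ k) f c = 0"
  using vanishes_to_order_higher_deriv[OF assms(1-2)] assms(3,4)
  unfolding vanishes_to_order_def by fastforce

definition eta_denom :: "nat \<Rightarrow> real \<Rightarrow> real poly" where
  "eta_denom m \<alpha> = [:0, 1:] ^ (m + 1) + [:\<alpha>, -\<alpha>:] ^ (m + 1)"

lemma poly_eta_denom: "poly (eta_denom m \<alpha>) t = Phi m t + Phi m (\<alpha> * (1 - t))"
  by (simp add: eta_denom_def Phi_def algebra_simps)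

lemma eta_denom_nonzero:
  assumes "\<alpha> > 0" and "t \<in> {0..1}"
  shows "poly (eta_denom m \<alpha>) t \<noteq> 0"
proof (cases "t = 0")
  case True
  with assms show ?thesis by (simp add: poly_eta_denom Phi_def)
next
  case False
  with assms have "t ^ (m + 1) > 0" "(\<alpha> * (1 - t)) ^ (m + 1) \<ge> 0" by auto
  then show ?thesis by (simp add: poly_eta_denom Phi_def)
qed

lemma eta_vanishes_at_0: "vanishes_to_order (eta_denom m \<alpha>) 0 (m + 1) (eta m \<alpha>)"
  unfolding vanishes_to_order_def
  by (rule exI[of _ 1], rule exI[of _ 1]) (simp add: eta_def poly_eta_denom Phi_def)

lemma eta_minus_1_vanishes_at_1:
  "vanishes_to_order (eta_denom m \<alpha>) 1 (m + 1) (\<lambda>t. eta m \<alpha> t - 1)"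
  unfolding vanishes_to_order_def
proof (intro exI allI impI)
  fix t assume nz: "poly (eta_denom m \<alpha>) t \<noteq> 0"
  have flip: "Phi m (\<alpha> * (1 - t)) = (-\<alpha>) ^ (m + 1) * (t - 1) ^ (m + 1)"
    unfolding Phi_def by (metis minus_diff_eq mult_minus_left mult_minus_right power_mult_distrib)
  from nz show "eta m \<alpha> t - 1
      = (t - 1) ^ (m + 1) * poly [:- ((-\<alpha>) ^ (m + 1)):] t / poly (eta_denom m \<alpha>) t ^ 1"
    unfolding eta_def poly_eta_denom flip by (simp add: field_simps)
qed

lemma tendsto_eta_at_right_0:
  assumes "t \<in> {0<..1}"
  shows "((\<lambda>a. eta m a t) \<longlongrightarrow> 1) (at_right 0)"
proof -
  have "((\<lambda>a. Phi m t / (Phi m t + Phi m (a * (1 - t))))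
          \<longlongrightarrow> Phi m t / (Phi m t + Phi m (0 * (1 - t)))) (at_right 0)"
    using assms unfolding Phi_def by (intro tendsto_intros) auto
  with assms show ?thesis
    by (simp add: eta_def Phi_def)
qed

theorem proposition2:
  fixes m :: nat and \<alpha> :: real
  assumes "\<alpha> > 0"
  shows "(\<forall>\<mu>\<in>{1..m}.
            (\<forall>t\<in>{0..1}. ((deriv ^^ (\<mu> - 1)) (eta m \<alpha>)) differentiable (at t))
          \<and> (deriv ^^ \<mu>) (eta m \<alpha>) 0 = 0
          \<and> (deriv ^^ \<mu>) (eta m \<alpha>) 1 = 0)
       \<and> eta m \<alpha> 0 = 0 \<and> eta m \<alpha> 1 = 1
       \<and> (\<forall>t\<in>{0<..1}. ((\<lambda>a. eta m a t) \<longlongrightarrow> 1) (at_right 0))"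
proof -
  let ?q = "eta_denom m \<alpha>"
  have at_0: "vanishes_to_order ?q 0 (m + 1) (\<lambda>t. eta m \<alpha> t - 0)"
    using eta_vanishes_at_0 by simp
  note at_1 = eta_minus_1_vanishes_at_1[of m \<alpha>]
  have nonzero: "poly ?q t \<noteq> 0" if "t \<in> {0..1}" for t
    using eta_denom_nonzero[OF assms that] .
  have "\<forall>\<mu>\<in>{1..m}.
          (\<forall>t\<in>{0..1}. ((deriv ^^ (\<mu> - 1)) (eta m \<alpha>)) differentiable (at t))
        \<and> (deriv ^^ \<mu>) (eta m \<alpha>) 0 = 0
        \<and> (deriv ^^ \<mu>) (eta m \<alpha>) 1 = 0"
    using higher_deriv_differentiable_if_vanishes[OF at_0] higher_deriv_zero_if_vanishes[OF at_0]
      higher_deriv_zero_if_vanishes[OF at_1] nonzero by auto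
  moreover have "eta m \<alpha> 0 = 0" "eta m \<alpha> 1 = 1"
    by (simp_all add: eta_def Phi_def)
  ultimately show ?thesis
    using tendsto_eta_at_right_0 by blast
qed

end
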